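(* Let $p\ge 5$ be a prime and $k$ an integer with $1\le k\le \frac{p-3}{2}$, and put $t=p-1-2k$. Then, modulo $p$, \[ (-1)^k 4^{2k-1} E_t \equiv 16^t S_t(0, \tfrac{1}{64}) + 2^t S_t(\tfrac{3}{8}, \tfrac{7}{16}) + (2^t + 4^t) S_t(\tfrac{7}{16}, \tfrac{15}{32}) + (2^t + 4^t + 8^t) S_t(\tfrac{15}{32}, \tfrac{31}{64}) + (2^t + 4^t + 8^t + 16^t) S_t(\tfrac{31}{64}, \tfrac{1}{2}). \]
   Context: $E_n$ denotes the $n$th Euler number, defined by $\sec z=\sum_{n\ge0}E_n\frac{z^n}{n!}$ (so $E_2=1$, $E_4=5$). For a prime $p$, an integer $\ell$ and real numbers $0\le x<y\le 1$, $S_\ell(x,y)=\sum_{xp<s<yp} s^\ell$, the sum over integers $s$ strictly between $xp$ and $yp$. Congruences between rational numbers modulo $p$ mean that the difference has $p$-adic valuation at least $1$. *)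

theory Defs
  imports "HOL-Computational_Algebra.Computational_Algebra"
begin

definition euler_num :: "nat \<Rightarrow> rat" where
  "euler_num n = fact n * fps_nth (inverse (fps_cos (1::rat))) n"

definition S_sum :: "int \<Rightarrow> nat \<Rightarrow> rat \<Rightarrow> rat \<Rightarrow> rat" where
  "S_sum l p x y = (\<Sum>s\<in>{s::int. x * of_nat p < of_int s \<and> of_int s < y * of_nat p}. (of_int s) powi l)"

text \<open>Congruence of rationals modulo a prime p: the difference has p-adic valuation at least 1.\<close>
definition qcong :: "nat \<Rightarrow> rat \<Rightarrow> rat \<Rightarrow> bool" where
  "qcong p a b \<longleftrightarrow> (\<exists>m n::int. a - b = of_int m / of_int n \<and> int p dvd m \<and> \<not> int p dvd n)"

end

theory Submission
  imports Defs "HOL-Number_Theory.Number_Theory"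
begin

text \<open>
  Both (-1)^(n div 2) E_n and D(n) = \<Sum>j<p. (-1)^j (2j+1)^n satisfy the recurrence
  \<Sum>(i \<le> n, i even) (n choose i) a(n - i) \<equiv> 0 (mod p) for n \<ge> 1: the first because
  cos z sec z = 1, the second because twice its left-hand side telescopes to (2p)^n and p is odd.
  Hence (-1)^(t div 2) E_t \<equiv> D(t).  For p = 2m + 1 and even 0 < t < p - 1, pairing the terms
  j = m - u and j = m + u gives D(t) \<equiv> 2 (-1)^m 2^t \<Sum>(u \<le> m) (-1)^u u^t.  Adding
  \<Sum>(u \<le> m) u^t, which is half of the vanishing power sum \<Sum>(s < p) s^t, leaves only the even u,
  so D(t) \<equiv> (-1)^m 4^(t+1) S_t(0, 1/4).  Finally, sorting the s in S_t(x, y) by parity and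
  writing the odd ones as p - 2r gives S_t(x, y) \<equiv> 2^t (S_t(x/2, y/2) + S_t((1-y)/2, (1-x)/2));
  four such halvings starting from (0, 1/4) produce the right-hand side, and Fermat's
  4^(p-1) \<equiv> 1 absorbs the remaining power of 4.
\<close>

section \<open>Euler numbers modulo an odd number\<close>

definition even_binomial_sum :: "(nat \<Rightarrow> 'a::comm_semiring_1) \<Rightarrow> nat \<Rightarrow> 'a" where
  "even_binomial_sum a n = (\<Sum>i\<le>n. if even i then of_nat (n choose i) * a (n - i) else 0)"

lemma even_binomial_sum_eq:
  "even_binomial_sum a n = a n + (\<Sum>i=1..n. if even i then of_nat (n choose i) * a (n - i) else 0)"
proof -
  have "{..n} = insert 0 {1..n}" by auto
  then show ?thesis unfolding even_binomial_sum_def by simp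
qed

lemma even_binomial_sum_sum:
  "even_binomial_sum (\<lambda>k. \<Sum>j\<in>J. f j k) n = (\<Sum>j\<in>J. even_binomial_sum (f j) n)"
  unfolding even_binomial_sum_def sum_distrib_left
  by (subst sum.swap[symmetric]) (auto intro!: sum.cong)

lemma even_binomial_sum_cmult:
  "even_binomial_sum (\<lambda>k. c * a k) n = c * even_binomial_sum a n"
  unfolding even_binomial_sum_def sum_distrib_left by (auto intro!: sum.cong simp: ac_simps)

lemma of_int_even_binomial_sum:
  "of_int (even_binomial_sum a n) = even_binomial_sum (\<lambda>k. of_int (a k)) n"
  unfolding even_binomial_sum_def of_int_sum by (auto intro!: sum.cong)

lemma even_binomial_sum_power:
  fixes x :: "'a::comm_ring_1"
  shows "2 * even_binomial_sum (\<lambda>k. x ^ k) n = (x + 1) ^ n + (x - 1) ^ n"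
proof -
  have "(x + 1) ^ n + (x - 1) ^ n = (\<Sum>i\<le>n. of_nat (n choose i) * (1 + (-1) ^ i) * x ^ (n - i))"
    using binomial_ring[of 1 x n] binomial_ring[of "-1" x n]
    by (simp add: add.commute sum.distrib[symmetric] algebra_simps)
  also have "\<dots> = (\<Sum>i\<le>n. 2 * (if even i then of_nat (n choose i) * x ^ (n - i) else 0))"
    by (rule sum.cong) auto
  finally show ?thesis by (simp add: even_binomial_sum_def sum_distrib_left)
qed

lemma signed_euler_num_recurrence:
  assumes "n \<ge> 1"
  shows "even_binomial_sum (\<lambda>k. (-1) ^ (k div 2) * euler_num k) n = 0"
proof -
  let ?c = "fps_cos (1::rat)"
  have "(?c * inverse ?c) $ n = 0"
    using assms by (simp add: inverse_mult_eq_1')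
  then have "fact n * (\<Sum>i\<le>n. ?c $ i * inverse ?c $ (n - i)) = 0"
    by (simp add: fps_mult_nth atLeast0AtMost)
  also have "fact n * (\<Sum>i\<le>n. ?c $ i * inverse ?c $ (n - i))
      = (-1) ^ (n div 2) * even_binomial_sum (\<lambda>k. (-1) ^ (k div 2) * euler_num k) n"
    unfolding even_binomial_sum_def sum_distrib_left
  proof (rule sum.cong[OF refl])
    fix i assume "i \<in> {..n}"
    then have "i \<le> n" by simp
    have binom: "(of_nat (n choose i) :: rat) = fact n / (fact i * fact (n - i))"
      using \<open>i \<le> n\<close> by (simp add: binomial_fact)
    have "(-1::rat) ^ (n div 2) * (-1) ^ ((n - i) div 2) = (-1) ^ (i div 2)" if "even i"
    proof -
      have "n div 2 = i div 2 + (n - i) div 2" using that \<open>i \<le> n\<close> by auto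
      then show ?thesis by (simp add: power_add mult.assoc flip: power_mult_distrib)
    qed
    then show "fact n * (?c $ i * inverse ?c $ (n - i)) = (-1) ^ (n div 2) *
        (if even i then of_nat (n choose i) * ((-1) ^ ((n - i) div 2) * euler_num (n - i)) else 0)"
      by (auto simp: binom fps_cos_def euler_num_def field_simps)
  qed
  finally show ?thesis by simp
qed

lemma Ints_of_even_binomial_recurrence:
  fixes a :: "nat \<Rightarrow> 'a::comm_ring_1"
  assumes "a 0 \<in> \<int>" and "\<And>n. n \<ge> 1 \<Longrightarrow> even_binomial_sum a n = 0"
  shows "a n \<in> \<int>"
proof (induction n rule: less_induct)
  case (less n)
  show ?case
  proof (cases "n = 0")
    case False
    then have "a n = - (\<Sum>i=1..n. if even i then of_nat (n choose i) * a (n - i) else 0)"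
      using assms(2)[of n] even_binomial_sum_eq[of a n] by (simp add: eq_neg_iff_add_eq_0)
    also have "\<dots> \<in> \<int>"
      using less by (intro Ints_minus Ints_sum) auto
    finally show ?thesis .
  qed (use assms(1) in simp)
qed

lemma euler_num_Ints: "euler_num n \<in> \<int>"
proof -
  have "(-1) ^ (n div 2) * euler_num n \<in> \<int>"
    by (rule Ints_of_even_binomial_recurrence[where a = "\<lambda>k. (-1) ^ (k div 2) * euler_num k"])
      (simp add: euler_num_def, simp add: signed_euler_num_recurrence)
  moreover have "euler_num n = (-1) ^ (n div 2) * ((-1) ^ (n div 2) * euler_num n)"
    by (simp flip: mult.assoc power_mult_distrib)
  ultimately show ?thesis
    by (metis Ints_mult Ints_minus Ints_1 Ints_power)
qed

lemma cong_of_even_binomial_recurrence: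
  fixes a b :: "nat \<Rightarrow> int"
  assumes "a 0 = b 0"
    and "\<And>n. n \<ge> 1 \<Longrightarrow> [even_binomial_sum a n = 0] (mod q)"
    and "\<And>n. n \<ge> 1 \<Longrightarrow> [even_binomial_sum b n = 0] (mod q)"
  shows "[a n = b n] (mod q)"
proof (induction n rule: less_induct)
  case (less n)
  show ?case
  proof (cases "n = 0")
    case False
    define tail where "tail c = (\<Sum>i=1..n. if even i then int (n choose i) * c (n - i) else 0)"
      for c :: "nat \<Rightarrow> int"
    have "[a n + tail a = 0] (mod q)" and "[b n + tail b = 0] (mod q)"
      using assms(2,3)[of n] False by (simp_all add: even_binomial_sum_eq tail_def)
    then have "[a n + tail a = b n + tail b] (mod q)"
      using cong_sym cong_trans by blast
    moreover have "[tail a = tail b] (mod q)"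
      unfolding tail_def using less by (intro cong_sum) (auto intro: cong_mult)
    ultimately show ?thesis
      using cong_diff by fastforce
  qed (use assms(1) in simp)
qed

definition alternating_odd_power_sum :: "nat \<Rightarrow> nat \<Rightarrow> int" where
  "alternating_odd_power_sum p n = (\<Sum>j<p. (-1) ^ j * (2 * int j + 1) ^ n)"

lemma alternating_sum_telescope:
  "(\<Sum>j<N. (-1) ^ j * (g (Suc j) + g j)) = g 0 - (-1) ^ N * (g N :: 'a::comm_ring_1)"
  by (induction N) (auto simp: algebra_simps)

lemma alternating_odd_power_sum_0:
  assumes "odd p"
  shows "alternating_odd_power_sum p 0 = 1"
proof -
  have "(\<Sum>j<N. (-1::int) ^ j) = (if odd N then 1 else 0)" for N
    by (induction N) auto
  then show ?thesis
    using assms by (simp add: alternating_odd_power_sum_def)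
qed

lemma alternating_odd_power_sum_recurrence:
  assumes "odd p" and "n \<ge> 1"
  shows "2 * even_binomial_sum (alternating_odd_power_sum p) n = (2 * int p) ^ n"
proof -
  have "2 * even_binomial_sum (alternating_odd_power_sum p) n
      = (\<Sum>j<p. (-1) ^ j * (2 * even_binomial_sum (\<lambda>k. (2 * int j + 1) ^ k) n))"
    unfolding alternating_odd_power_sum_def
    by (simp add: even_binomial_sum_sum even_binomial_sum_cmult sum_distrib_left ac_simps)
  also have "\<dots> = (\<Sum>j<p. (-1) ^ j * ((2 * int (Suc j)) ^ n + (2 * int j) ^ n))"
    by (simp add: even_binomial_sum_power algebra_simps)
  also have "\<dots> = (2 * int 0) ^ n - (-1) ^ p * (2 * int p) ^ n"
    by (rule alternating_sum_telescope)
  finally show ?thesis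
    using assms by simp
qed

lemma signed_euler_num_cong:
  assumes "odd p"
  shows "[(-1) ^ (n div 2) * \<lfloor>euler_num n\<rfloor> = alternating_odd_power_sum p n] (mod int p)"
proof (rule cong_of_even_binomial_recurrence)
  show "(-1) ^ (0 div 2) * \<lfloor>euler_num 0\<rfloor> = alternating_odd_power_sum p 0"
    using assms by (simp add: alternating_odd_power_sum_0 euler_num_def)
next
  fix n :: nat assume "n \<ge> 1"
  have "of_int (even_binomial_sum (\<lambda>k. (-1) ^ (k div 2) * \<lfloor>euler_num k\<rfloor>) n)
      = even_binomial_sum (\<lambda>k. (-1) ^ (k div 2) * euler_num k) n"
    by (simp add: of_int_even_binomial_sum euler_num_Ints)
  then show "[even_binomial_sum (\<lambda>k. (-1) ^ (k div 2) * \<lfloor>euler_num k\<rfloor>) n = 0] (mod int p)"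
    using signed_euler_num_recurrence[OF \<open>n \<ge> 1\<close>] by simp
  have "coprime 2 (int p)"
    using assms by simp
  moreover have "[2 * even_binomial_sum (alternating_odd_power_sum p) n = 2 * 0] (mod int p)"
    using alternating_odd_power_sum_recurrence[OF assms \<open>n \<ge> 1\<close>] \<open>n \<ge> 1\<close>
    by (simp add: cong_0_iff power_mult_distrib)
  ultimately show "[even_binomial_sum (alternating_odd_power_sum p) n = 0] (mod int p)"
    by (simp only: cong_mult_lcancel)
qed

section \<open>Power sums modulo a prime\<close>

lemma even_power_reflect_cong:
  fixes P x :: int
  assumes "even t"
  shows "[(P - x) ^ t = x ^ t] (mod P)"
proof -
  have "[(P - x) ^ t = (- x) ^ t] (mod P)"
    by (intro cong_pow) (simp add: cong_iff_dvd_diff)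
  then show ?thesis
    using assms by simp
qed

lemma power_shift_cong:
  fixes P x :: int
  shows "[(P + x) ^ t = x ^ t] (mod P)"
  by (intro cong_pow) (simp add: cong_iff_dvd_diff)

lemma power_sum_mod_prime:
  assumes "prime p" and "\<not> (p - 1) dvd t"
  shows "[(\<Sum>s=1..<p. int s ^ t) = 0] (mod int p)"
proof -
  obtain g where "residue_primroot p g"
    using prime_primitive_root_exists[OF prime_gt_1_nat assms(1)] assms(1) by blast
  then have cop: "coprime (int g) (int p)" and ord: "ord p g = p - 1"
    using assms(1) by (auto simp: residue_primroot_def totient_prime coprime_commute)
  define S where "S = (\<Sum>s\<in>{1..<int p}. s ^ t)"
  have "S = (\<Sum>s\<in>{1..<int p}. (int g * s mod int p) ^ t)"
    unfolding S_def
    using sum.reindex_bij_betw[OF bij_betw_int_remainders_mult[OF cop], of "\<lambda>s. s ^ t"] by simp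
  also have "[\<dots> = (\<Sum>s\<in>{1..<int p}. (int g * s) ^ t)] (mod int p)"
    by (intro cong_sum cong_pow) (simp add: cong_def)
  also have "(\<Sum>s\<in>{1..<int p}. (int g * s) ^ t) = int g ^ t * S"
    by (simp add: S_def power_mult_distrib sum_distrib_left)
  finally have "int p dvd S * (1 - int g ^ t)"
    by (simp add: cong_iff_dvd_diff algebra_simps)
  moreover have "\<not> int p dvd 1 - int g ^ t"
  proof
    assume "int p dvd 1 - int g ^ t"
    then have "[g ^ t = 1] (mod p)"
      by (simp add: cong_iff_dvd_diff dvd_diff_commute flip: cong_int_iff)
    then show False
      using assms(2) ord by (simp add: ord_divides')
  qed
  ultimately have "int p dvd S"
    using assms(1) by (simp add: prime_dvd_mult_iff)
  moreover have "S = (\<Sum>s=1..<p. int s ^ t)"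
    unfolding S_def by (rule sum.reindex_bij_witness[of _ int nat]) auto
  ultimately show ?thesis
    by (simp add: cong_0_iff)
qed

lemma half_power_sum_mod_prime:
  assumes "prime p" and "p = 2 * m + 1" and "even t" and "0 < t" and "t < p - 1"
  shows "[(\<Sum>u=1..m. int u ^ t) = 0] (mod int p)"
proof -
  have "\<not> (p - 1) dvd t"
    using assms(4,5) by (auto dest: dvd_imp_le)
  then have "[0 = (\<Sum>s=1..<p. int s ^ t)] (mod int p)"
    using power_sum_mod_prime[OF assms(1)] by (simp add: cong_sym)
  also have "(\<Sum>s=1..<p. int s ^ t) = (\<Sum>s=1..m. int s ^ t) + (\<Sum>s=m+1..<p. int s ^ t)"
    using sum.atLeastLessThan_concat[of 1 "m + 1" p "\<lambda>s. int s ^ t"] assms(2)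
    by (simp add: atLeastLessThanSuc_atLeastAtMost)
  also have "(\<Sum>s=m+1..<p. int s ^ t) = (\<Sum>u=1..m. (int p - int u) ^ t)"
    by (rule sum.reindex_bij_witness[of _ "\<lambda>u. p - u" "\<lambda>s. p - s"]) (use assms(2) in auto)
  also have "[(\<Sum>s=1..m. int s ^ t) + (\<Sum>u=1..m. (int p - int u) ^ t)
      = 2 * (\<Sum>u=1..m. int u ^ t)] (mod int p)"
    unfolding mult_2
    by (intro cong_add cong_refl cong_sum even_power_reflect_cong assms(3))
  finally have "[2 * (\<Sum>u=1..m. int u ^ t) = 2 * 0] (mod int p)"
    by (simp add: cong_sym)
  moreover have "coprime 2 (int p)"
    using assms(2) by simp
  ultimately show ?thesis
    by (simp only: cong_mult_lcancel)
qed

lemma sum_lessThan_around_middle: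
  fixes g :: "nat \<Rightarrow> 'a::comm_monoid_add"
  shows "(\<Sum>j<2 * m + 1. g j) = g m + (\<Sum>u=1..m. g (m - u) + g (m + u))"
proof -
  have "(\<Sum>j<2 * m + 1. g j) = (\<Sum>j=0..<m. g j) + (\<Sum>j=m..<2 * m + 1. g j)"
    unfolding atLeast0LessThan[symmetric] by (rule sum.atLeastLessThan_concat[symmetric]) auto
  also have "(\<Sum>j=m..<2 * m + 1. g j) = g m + (\<Sum>j=Suc m..<2 * m + 1. g j)"
    by (rule sum.atLeast_Suc_lessThan) auto
  also have "(\<Sum>j=Suc m..<2 * m + 1. g j) = (\<Sum>u=1..m. g (m + u))"
    by (rule sum.reindex_bij_witness[of _ "\<lambda>u. m + u" "\<lambda>j. j - m"]) auto
  also have "(\<Sum>j=0..<m. g j) = (\<Sum>u=1..m. g (m - u))"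
    by (rule sum.reindex_bij_witness[of _ "\<lambda>j. m - j" "\<lambda>u. m - u"]) auto
  finally show ?thesis
    by (simp add: sum.distrib ac_simps)
qed

lemma alternating_odd_power_sum_fold:
  assumes "p = 2 * m + 1" and "even t" and "0 < t"
  shows "[alternating_odd_power_sum p t = 2 * (-1) ^ m * 2 ^ t * (\<Sum>u=1..m. (-1) ^ u * int u ^ t)]
    (mod int p)"
proof -
  define g where "g j = (-1::int) ^ j * (2 * int j + 1) ^ t" for j
  have split: "alternating_odd_power_sum p t = g m + (\<Sum>u=1..m. g (m - u) + g (m + u))"
    unfolding alternating_odd_power_sum_def g_def assms(1) by (rule sum_lessThan_around_middle)
  have "g m = (-1) ^ m * int p ^ t"
    unfolding g_def using assms(1) by (simp add: add.commute)
  then have middle: "[g m = 0] (mod int p)"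
    using assms(3) by (simp add: cong_0_iff)
  have pair: "[g (m - u) + g (m + u) = 2 * (-1) ^ m * 2 ^ t * ((-1) ^ u * int u ^ t)] (mod int p)"
    if "u \<in> {1..m}" for u
  proof -
    have "m + u = m - u + 2 * u"
      using that by simp
    then have "(-1::int) ^ (m + u) = (-1) ^ (m - u + 2 * u)"
      by (rule arg_cong)
    then have sign: "(-1::int) ^ (m - u) = (-1) ^ (m + u)"
      by (simp add: power_add)
    have odd_eqs: "2 * int (m - u) + 1 = int p - 2 * int u" "2 * int (m + u) + 1 = int p + 2 * int u"
      using that assms(1) by auto
    have "[g (m - u) + g (m + u) = (-1) ^ (m + u) * (2 * int u) ^ t + (-1) ^ (m + u) * (2 * int u) ^ t]
        (mod int p)"
      unfolding g_def sign odd_eqs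
      by (intro cong_add cong_scalar_left even_power_reflect_cong power_shift_cong assms(2))
    then show ?thesis
      by (simp add: power_add power_mult_distrib algebra_simps)
  qed
  have "[alternating_odd_power_sum p t = 0 + (\<Sum>u=1..m. 2 * (-1) ^ m * 2 ^ t * ((-1) ^ u * int u ^ t))]
      (mod int p)"
    unfolding split by (intro cong_add middle cong_sum pair)
  then show ?thesis
    by (simp add: sum_distrib_left)
qed

lemma alternating_plus_plain_power_sum:
  "(\<Sum>u=1..m. (-1) ^ u * int u ^ t) + (\<Sum>u=1..m. int u ^ t) = 2 * 2 ^ t * (\<Sum>r=1..m div 2. int r ^ t)"
proof -
  have "(\<Sum>u=1..m. (-1) ^ u * int u ^ t) + (\<Sum>u=1..m. int u ^ t)
      = (\<Sum>u=1..m. if even u then 2 * int u ^ t else 0)"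
    by (simp add: sum.distrib[symmetric]) (rule sum.cong, auto)
  also have "\<dots> = (\<Sum>u\<in>{u\<in>{1..m}. even u}. 2 * int u ^ t)"
    by (rule sum.inter_filter[symmetric]) simp
  also have "\<dots> = (\<Sum>r=1..m div 2. 2 * int (2 * r) ^ t)"
    by (rule sum.reindex_bij_witness[of _ "\<lambda>r. 2 * r" "\<lambda>u. u div 2"]) auto
  finally show ?thesis
    by (simp add: sum_distrib_left power_mult_distrib algebra_simps)
qed

section \<open>Power sums over rational intervals\<close>

definition power_sum_between :: "nat \<Rightarrow> 'a::floor_ceiling \<Rightarrow> 'a \<Rightarrow> int" where
  "power_sum_between t a b = (\<Sum>s | a < of_int s \<and> of_int s < b. s ^ t)"

lemma finite_ints_between:
  fixes a b :: "'a::floor_ceiling"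
  shows "finite {s::int. a < of_int s \<and> of_int s < b}"
proof (rule finite_subset)
  show "{s::int. a < of_int s \<and> of_int s < b} \<subseteq> {\<lfloor>a\<rfloor>..\<lceil>b\<rceil>}"
  proof
    fix s assume "s \<in> {s::int. a < of_int s \<and> of_int s < b}"
    then have "\<lfloor>a\<rfloor> \<le> \<lfloor>(of_int s :: 'a)\<rfloor>" and "\<lceil>(of_int s :: 'a)\<rceil> \<le> \<lceil>b\<rceil>"
      by (intro floor_mono ceiling_mono; simp)+
    then show "s \<in> {\<lfloor>a\<rfloor>..\<lceil>b\<rceil>}"
      by simp
  qed
qed simp

lemma power_sum_between_quarter:
  assumes "p = 2 * m + 1"
  shows "power_sum_between t 0 (of_nat p / 4 :: 'a::floor_ceiling) = (\<Sum>r=1..m div 2. int r ^ t)"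
proof -
  have iff: "(of_int s :: 'a) < of_nat p / 4 \<longleftrightarrow> s \<le> int (m div 2)" for s
  proof -
    have "(of_int s :: 'a) < of_nat p / 4 \<longleftrightarrow> of_int (4 * s) < (of_int (2 * int m + 1) :: 'a)"
      using assms by (simp add: field_simps)
    then show ?thesis
      unfolding of_int_less_iff by (simp add: of_nat_div) presburger
  qed
  have "{s. 0 < (of_int s :: 'a) \<and> (of_int s :: 'a) < of_nat p / 4} = {s. 0 < s \<and> s \<le> int (m div 2)}"
    by (simp only: iff of_int_0_less_iff)
  also have "\<dots> = int ` {1..m div 2}"
    by (auto simp: image_int_atLeastAtMost)
  finally show ?thesis
    unfolding power_sum_between_def by (simp add: sum.reindex)
qed

lemma alternating_odd_power_sum_quarter:
  assumes "prime p" and "p = 2 * m + 1" and "even t" and "0 < t" and "t < p - 1"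
  shows "[alternating_odd_power_sum p t = (-1) ^ m * 4 ^ (t + 1) * power_sum_between t 0 (of_nat p / 4 :: rat)]
    (mod int p)"
proof -
  let ?W = "\<Sum>u=1..m. (-1) ^ u * int u ^ t" and ?H = "\<Sum>u=1..m. int u ^ t"
  have "[?W + 0 = ?W + ?H] (mod int p)"
    by (rule cong_add[OF cong_refl cong_sym[OF half_power_sum_mod_prime[OF assms]]])
  then have W: "[?W = ?W + ?H] (mod int p)"
    by simp
  have "[alternating_odd_power_sum p t = 2 * (-1) ^ m * 2 ^ t * ?W] (mod int p)"
    by (rule alternating_odd_power_sum_fold[OF assms(2-4)])
  also have "[2 * (-1) ^ m * 2 ^ t * ?W = 2 * (-1) ^ m * 2 ^ t * (?W + ?H)] (mod int p)"
    using W by (rule cong_scalar_left)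
  also have "2 * (-1) ^ m * 2 ^ t * (?W + ?H) = (-1) ^ m * 4 ^ (t + 1) * power_sum_between t 0 (of_nat p / 4 :: rat)"
    unfolding alternating_plus_plain_power_sum power_sum_between_quarter[OF assms(2)]
    by (simp add: power_mult_distrib[symmetric])
  finally show ?thesis .
qed

lemma euler_num_cong_quarter_power_sum:
  assumes "prime p" and "p = 2 * (k + h) + 1" and "0 < h" and "0 < k"
  shows "[(-1) ^ k * 4 ^ (2 * k - 1) * \<lfloor>euler_num (2 * h)\<rfloor>
    = power_sum_between (2 * h) 0 (of_nat p / 4 :: rat)] (mod int p)"
proof -
  define m where "m = k + h"
  define A where "A = power_sum_between (2 * h) 0 (of_nat p / 4 :: rat)"
  have signs: "(-1::int) ^ k * (-1) ^ h * (-1) ^ m = 1"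
    by (simp add: m_def minus_one_power_iff flip: power_add)
  have "p - 1 = (2 * k - 1) + (2 * h + 1)"
    using assms(2,4) by simp
  then have fours: "(4::int) ^ (2 * k - 1) * 4 ^ (2 * h + 1) = 4 ^ (p - 1)"
    by (simp only: power_add)
  have "\<not> p dvd 4"
    using assms(2,3,4) by (auto dest: dvd_imp_le)
  then have fermat: "[4 ^ (p - 1) = 1] (mod int p)"
    using fermat_theorem[OF assms(1), of 4] by (simp flip: cong_int_iff)
  have "(-1) ^ k * 4 ^ (2 * k - 1) * \<lfloor>euler_num (2 * h)\<rfloor>
      = (-1) ^ k * 4 ^ (2 * k - 1) * (-1) ^ h * ((-1) ^ (2 * h div 2) * \<lfloor>euler_num (2 * h)\<rfloor>)"
    by (simp add: mult.assoc flip: power_mult_distrib)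
  also have "[\<dots> = (-1) ^ k * 4 ^ (2 * k - 1) * (-1) ^ h * ((-1) ^ m * 4 ^ (2 * h + 1) * A)] (mod int p)"
    unfolding A_def using assms(1-4) m_def
    by (intro cong_scalar_left cong_trans[OF signed_euler_num_cong alternating_odd_power_sum_quarter]) auto
  also have "(-1) ^ k * 4 ^ (2 * k - 1) * (-1) ^ h * ((-1) ^ m * 4 ^ (2 * h + 1) * A)
      = ((-1) ^ k * (-1) ^ h * (-1) ^ m) * (4 ^ (2 * k - 1) * 4 ^ (2 * h + 1)) * A"
    by (simp only: ac_simps)
  also have "\<dots> = 4 ^ (p - 1) * A"
    by (simp only: signs fours mult_1)
  also have "[4 ^ (p - 1) * A = 1 * A] (mod int p)"
    by (rule cong_scalar_right[OF fermat])
  finally show ?thesis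
    by (simp add: A_def)
qed

lemma power_sum_between_parity_split:
  fixes P :: int and a b :: "'a::floor_ceiling"
  assumes "odd P" and "even t"
  shows "[power_sum_between t a b = 2 ^ t * (power_sum_between t (a / 2) (b / 2)
      + power_sum_between t ((of_int P - b) / 2) ((of_int P - a) / 2))] (mod P)"
proof -
  define I where "I = {s::int. a < of_int s \<and> of_int s < b}"
  define J where "J = {r::int. (of_int P - b) / 2 < of_int r \<and> of_int r < (of_int P - a) / 2}"
  have "power_sum_between t a b = (\<Sum>s\<in>I \<inter> Collect even. s ^ t) + (\<Sum>s\<in>I - Collect even. s ^ t)"
    unfolding power_sum_between_def I_def by (rule sum.Int_Diff[OF finite_ints_between])
  moreover have "(\<Sum>s\<in>I \<inter> Collect even. s ^ t) = 2 ^ t * power_sum_between t (a / 2) (b / 2)"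
  proof -
    have "(\<Sum>s\<in>I \<inter> Collect even. s ^ t) = (\<Sum>r | a / 2 < of_int r \<and> of_int r < b / 2. (2 * r) ^ t)"
      unfolding I_def
      by (rule sum.reindex_bij_witness[of _ "\<lambda>r. 2 * r" "\<lambda>s. s div 2"]) (auto simp: field_simps elim!: evenE)
    then show ?thesis
      by (simp add: power_sum_between_def power_mult_distrib sum_distrib_left)
  qed
  moreover have "(\<Sum>s\<in>I - Collect even. s ^ t) = (\<Sum>r\<in>J. (P - 2 * r) ^ t)"
    unfolding I_def J_def
    by (rule sum.reindex_bij_witness[of _ "\<lambda>r. P - 2 * r" "\<lambda>s. (P - s) div 2"])
      (use assms(1) in \<open>auto simp: field_simps elim!: oddE\<close>)
  moreover have "[(\<Sum>r\<in>J. (P - 2 * r) ^ t) = 2 ^ t * power_sum_between t ((of_int P - b) / 2) ((of_int P - a) / 2)]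
      (mod P)"
  proof -
    have "[(\<Sum>r\<in>J. (P - 2 * r) ^ t) = (\<Sum>r\<in>J. (2 * r) ^ t)] (mod P)"
      by (intro cong_sum even_power_reflect_cong assms(2))
    then show ?thesis
      by (simp add: J_def power_sum_between_def power_mult_distrib sum_distrib_left)
  qed
  ultimately show ?thesis
    by (simp add: distrib_left cong_add_lcancel)
qed

lemma power_sum_between_scaled_parity_split:
  assumes "odd p" and "even t"
  shows "[power_sum_between t (x * of_nat p) (y * of_nat p :: rat)
    = 2 ^ t * (power_sum_between t (x / 2 * of_nat p) (y / 2 * of_nat p)
      + power_sum_between t ((1 - y) / 2 * of_nat p) ((1 - x) / 2 * of_nat p))] (mod int p)"
proof -
  have scale: "z * of_nat p / 2 = z / 2 * (of_nat p :: rat)"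
    and reflect: "(of_nat p - z * of_nat p) / 2 = (1 - z) / 2 * (of_nat p :: rat)" for z
    by (simp_all add: field_simps)
  have "odd (int p)"
    using assms(1) by simp
  from power_sum_between_parity_split[OF this assms(2), where a = "x * of_nat p" and b = "y * of_nat p"]
  show ?thesis
    unfolding of_int_of_nat_eq by (simp only: scale reflect)
qed

lemma power_sum_between_split:
  assumes "a \<le> b" and "b \<le> c" and "b \<notin> \<int>"
  shows "power_sum_between t a c = power_sum_between t a b + power_sum_between t b c"
proof -
  have "of_int s \<noteq> b" for s :: int
    using assms(3) by auto
  then have "{s. a < of_int s \<and> of_int s < c}
      = {s. a < of_int s \<and> of_int s < b} \<union> {s. b < of_int s \<and> of_int s < c}"
    using assms(1,2) by (auto simp: neq_iff)
  then show ?thesis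
    unfolding power_sum_between_def
    by (subst sum.union_disjoint[symmetric]) (auto simp: finite_ints_between)
qed

lemma odd_div_even_mult_odd_notin_Ints:
  assumes "odd a" and "even b" and "b \<noteq> 0" and "odd c"
  shows "of_int a / of_int b * of_int c \<notin> (\<int> :: 'a::field_char_0 set)"
proof
  assume "of_int a / of_int b * of_int c \<in> (\<int> :: 'a set)"
  then obtain n where "of_int a / of_int b * of_int c = (of_int n :: 'a)"
    by (auto elim: Ints_cases)
  then have "of_int (a * c) = (of_int (b * n) :: 'a)"
    using assms(3) by (simp add: field_simps)
  then have "a * c = b * n"
    by (simp only: of_int_eq_iff)
  then show False
    using assms(1,2,4) by (metis even_mult_iff)
qed

lemma power_sum_quarter_expansion:
  assumes "odd p" and "even t"
  defines "S x y \<equiv> power_sum_between t (x * of_nat p) (y * of_nat p :: rat)"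
  shows "[power_sum_between t 0 (of_nat p / 4 :: rat) = 16 ^ t * S 0 (1/64) + 2 ^ t * S (3/8) (7/16)
      + (2 ^ t + 4 ^ t) * S (7/16) (15/32) + (2 ^ t + 4 ^ t + 8 ^ t) * S (15/32) (31/64)
      + (2 ^ t + 4 ^ t + 8 ^ t + 16 ^ t) * S (31/64) (1/2)] (mod int p)"
proof -
  have "[S x y = 2 ^ t * (S (x / 2) (y / 2) + S ((1 - y) / 2) ((1 - x) / 2))] (mod int p)" for x y
    unfolding S_def by (rule power_sum_between_scaled_parity_split[OF assms(1,2)])
  then have halve: "[S 0 y = 2 ^ t * (S 0 (y / 2) + S ((1 - y) / 2) (1 / 2))] (mod int p)" for y
    by (metis diff_zero div_0)
  have split: "S x z = S x y + S y z" if "x \<le> y" and "y \<le> z" and "y * of_nat p \<notin> \<int>" for x y z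
    unfolding S_def using that by (intro power_sum_between_split) (auto intro: mult_right_mono)
  have notin: "of_int a / of_int b * of_nat p \<notin> (\<int> :: rat set)" if "odd a" and "even b" and "b \<noteq> 0" for a b
    using odd_div_even_mult_odd_notin_Ints[OF that, of "int p"] assms(1) by simp
  have R3: "S (3/8) (1/2) = S (3/8) (7/16) + S (7/16) (1/2)"
    using split notin[of 7 16] by simp
  have R7: "S (7/16) (1/2) = S (7/16) (15/32) + S (15/32) (1/2)"
    using split notin[of 15 32] by simp
  have R15: "S (15/32) (1/2) = S (15/32) (31/64) + S (31/64) (1/2)"
    using split notin[of 31 64] by simp
  let ?x = "2 ^ t :: int"
  have pows: "(4::int) ^ t = ?x * ?x" "(8::int) ^ t = ?x * ?x * ?x" "(16::int) ^ t = ?x * ?x * ?x * ?x"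
    by (simp_all flip: power_mult_distrib)
  have "[power_sum_between t 0 (of_nat p / 4 :: rat) = ?x * (S 0 (1/8) + S (3/8) (1/2))] (mod int p)"
    using halve[of "1/4"] by (simp add: S_def)
  also have "[?x * (S 0 (1/8) + S (3/8) (1/2)) = ?x * (?x * (S 0 (1/16) + S (7/16) (1/2)) + S (3/8) (1/2))] (mod int p)"
    using halve[of "1/8"] by (intro cong_scalar_left cong_add cong_refl) simp
  also have "[?x * (?x * (S 0 (1/16) + S (7/16) (1/2)) + S (3/8) (1/2))
      = ?x * (?x * (?x * (S 0 (1/32) + S (15/32) (1/2)) + S (7/16) (1/2)) + S (3/8) (1/2))] (mod int p)"
    using halve[of "1/16"] by (intro cong_scalar_left cong_add cong_refl) simp
  also have "[?x * (?x * (?x * (S 0 (1/32) + S (15/32) (1/2)) + S (7/16) (1/2)) + S (3/8) (1/2))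
      = ?x * (?x * (?x * (?x * (S 0 (1/64) + S (31/64) (1/2)) + S (15/32) (1/2)) + S (7/16) (1/2))
        + S (3/8) (1/2))] (mod int p)"
    using halve[of "1/32"] by (intro cong_scalar_left cong_add cong_refl) simp
  also have "?x * (?x * (?x * (?x * (S 0 (1/64) + S (31/64) (1/2)) + S (15/32) (1/2)) + S (7/16) (1/2))
        + S (3/8) (1/2))
      = 16 ^ t * S 0 (1/64) + 2 ^ t * S (3/8) (7/16) + (2 ^ t + 4 ^ t) * S (7/16) (15/32)
        + (2 ^ t + 4 ^ t + 8 ^ t) * S (15/32) (31/64) + (2 ^ t + 4 ^ t + 8 ^ t + 16 ^ t) * S (31/64) (1/2)"
    unfolding R3 R7 R15 pows by (simp add: algebra_simps)
  finally show ?thesis .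
qed

lemma S_sum_eq_power_sum_between:
  "S_sum (int t) p x y = of_int (power_sum_between t (x * of_nat p) (y * of_nat p))"
  unfolding S_sum_def power_sum_between_def by (simp add: power_int_of_nat mult.commute)

lemma qcong_of_int_cong:
  assumes "prime p" and "[a = b] (mod int p)"
  shows "qcong p (of_int a) (of_int b)"
proof -
  have "int p dvd a - b"
    using assms(2) by (simp add: cong_iff_dvd_diff)
  moreover have "\<not> int p dvd 1"
    using prime_gt_1_nat[OF assms(1)] by simp
  moreover have "of_int a - of_int b = (of_int (a - b) / of_int 1 :: rat)"
    by simp
  ultimately show ?thesis
    unfolding qcong_def by blast
qed

theorem mainTheorem6:
  fixes p k :: nat
  assumes "prime p" and "p \<ge> 5" and "1 \<le> k" and "k \<le> (p - 3) div 2"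
  defines "t \<equiv> p - 1 - 2 * k"
  shows "qcong p ((-1) ^ k * 4 ^ (2 * k - 1) * euler_num t)
     (16 ^ t * S_sum (int t) p 0 (1/64)
      + 2 ^ t * S_sum (int t) p (3/8) (7/16)
      + (2 ^ t + 4 ^ t) * S_sum (int t) p (7/16) (15/32)
      + (2 ^ t + 4 ^ t + 8 ^ t) * S_sum (int t) p (15/32) (31/64)
      + (2 ^ t + 4 ^ t + 8 ^ t + 16 ^ t) * S_sum (int t) p (31/64) (1/2))"
proof -
  have "odd p"
    using assms(1,2) prime_odd_nat by auto
  then obtain m where p: "p = 2 * m + 1"
    using oddE by blast
  then have t: "t = 2 * (m - k)" and "0 < m - k"
    using assms(3,4) by (auto simp: t_def)
  then have "even t" and p': "p = 2 * (k + (m - k)) + 1"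
    using p by simp_all
  from euler_num_cong_quarter_power_sum[OF assms(1) p' \<open>0 < m - k\<close>] assms(3)
  have "[(-1) ^ k * 4 ^ (2 * k - 1) * \<lfloor>euler_num t\<rfloor> = power_sum_between t 0 (of_nat p / 4 :: rat)]
      (mod int p)"
    by (simp add: t)
  from qcong_of_int_cong[OF assms(1) cong_trans[OF this power_sum_quarter_expansion[OF \<open>odd p\<close> \<open>even t\<close>]]]
  show ?thesis
    by (simp add: S_sum_eq_power_sum_between euler_num_Ints)
qed

end
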